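(* Let $f:\mathbb{R}^2\to\mathbb{R}^2$ be $C^1$. Let $R$ be a connected component of $\mathbb{R}^2\setminus f^{-1}(f(S)\cup C(f,\infty))$ and let $\Omega$ be a connected component of $\mathbb{R}^2\setminus(f(S)\cup C(f,\infty))$ such that $f(z)\in\Omega$ for some $z\in R$. Let $w\in\partial\Omega$ satisfy: (i) $w\notin C(f|_R,\infty)$; (ii) $f^{-1}(w)\cap\partial R\cap S=\varnothing$; (iii) $f^{-1}(w)\cap\partial R\neq\varnothing$; and (iv) for each $\zeta\in f^{-1}(w)\cap\partial R$ there is a neighborhood $U_\zeta$ of $\zeta$ with $f(U_\zeta\setminus R)\cap\Omega=\varnothing$. Then $w$ has exactly $\mathrm{Val}(f|_R,\Omega)$ distinct preimages on $\partial R$.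
   Context: Write $f=(u,v)$; $J_f=u_xv_y-u_yv_x$ and $S=\{z\in\mathbb{R}^2: J_f(z)=0\}$. For a function $g$ defined on a set $D\subseteq\mathbb{R}^2$, $C(g,\infty)$ is the set of finite points $\zeta$ for which there is a sequence $(z_n)\subset D$ with $|z_n|\to\infty$ and $g(z_n)\to\zeta$. For $W\subseteq\mathbb{R}^2$, $\mathrm{Val}(f|_R,W)=\sup_{w\in W}\#\{z\in R: f(z)=w\}$. *)

theory Defs
  imports "HOL-Analysis.Analysis" "HOL-Library.Extended_Nat"
begin

text \<open>Jacobian determinant of f = (u,v) at z, from its derivative D = f' z:
  J = u_x v_y - u_y v_x, where u_x = (D e1)$1, v_x = (D e1)$2, u_y = (D e2)$1, v_y = (D e2)$2.\<close>
definition jac :: "(real^2 \<Rightarrow> ((real^2) \<Rightarrow>\<^sub>L (real^2))) \<Rightarrow> real^2 \<Rightarrow> real" where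
  "jac f' z = (let D = blinfun_apply (f' z) in
     (D (axis 1 1)) $ 1 * (D (axis 2 1)) $ 2 - (D (axis 2 1)) $ 1 * (D (axis 1 1)) $ 2)"

definition critset :: "(real^2 \<Rightarrow> ((real^2) \<Rightarrow>\<^sub>L (real^2))) \<Rightarrow> (real^2) set" where
  "critset f' = {z. jac f' z = 0}"

definition cluster_inf :: "(real^2 \<Rightarrow> real^2) \<Rightarrow> (real^2) set \<Rightarrow> (real^2) set" where
  "cluster_inf g D = {\<zeta>. \<exists>zs. (\<forall>n. zs n \<in> D) \<and> filterlim (\<lambda>n. norm (zs n)) at_top sequentially
                          \<and> ((\<lambda>n. g (zs n)) \<longlongrightarrow> \<zeta>) sequentially}"

definition ecount :: "'a set \<Rightarrow> enat" where
  "ecount A = (if finite A then enat (card A) else \<infinity>)"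

definition Val :: "(real^2 \<Rightarrow> real^2) \<Rightarrow> (real^2) set \<Rightarrow> (real^2) set \<Rightarrow> enat" where
  "Val f R W = (SUP w\<in>W. ecount {z\<in>R. f z = w})"

end

theory Submission
  imports Defs
begin

(* Let y be a value with y not in C(f|R, oo). Then f restricted to R is proper near y: preimages in R
   of values close to y stay bounded, so they can only accumulate at the compact set
   P = f^-1(y) \<inter> closure R. If f is a local homeomorphism at every point of P, then P is finite, and
   every point of P has a small neighbourhood that f maps homeomorphically onto a neighbourhood of y.
   Suppose moreover that no point of such a neighbourhood outside R maps into \<Omega>. Then every value
   y' in \<Omega> near y has exactly one preimage in R in each of these neighbourhoods and no other
   preimage in R. So #(f^-1(y') \<inter> R) = #P.
   At a point y of \<Omega> we have P \<subseteq> R and J_f does not vanish on P. This makes the fibre count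
   locally constant, and hence constant on the connected set \<Omega>. At y = w, hypotheses (i), (ii)
   and (iv) identify the constant with the number of preimages of w on the frontier of R. *)

lemma finite_if_compact_locally_injective:
  assumes "compact P" and const: "\<And>x. x \<in> P \<Longrightarrow> f x = c"
    and "\<And>x. x \<in> P \<Longrightarrow> \<exists>U. open U \<and> x \<in> U \<and> inj_on f U"
  shows "finite P"
proof -
  obtain U where U: "\<And>x. x \<in> P \<Longrightarrow> open (U x) \<and> x \<in> U x \<and> inj_on f (U x)"
    using assms(3) by metis
  obtain F where F: "F \<subseteq> P" "finite F" "P \<subseteq> (\<Union>x\<in>F. U x)"
    by (rule compactE_image[OF assms(1), of P U]) (use U in auto)
  have "P \<subseteq> F"
  proof
    fix x assume x: "x \<in> P"
    then obtain x' where "x' \<in> F" "x \<in> U x'"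
      using F(3) by blast
    with x F(1) U const show "x \<in> F"
      by (metis inj_onD subsetD)
  qed
  with F(2) show ?thesis
    using finite_subset by blast
qed

lemma finite_disjoint_balls:
  fixes P :: "'a::metric_space set"
  assumes "finite P"
  obtains r where "\<And>x. x \<in> P \<Longrightarrow> r x > 0"
    "\<And>x y. x \<in> P \<Longrightarrow> y \<in> P \<Longrightarrow> x \<noteq> y \<Longrightarrow> ball x (r x) \<inter> ball y (r y) = {}"
proof -
  obtain d where d: "\<And>x. x \<in> P \<Longrightarrow> d x > 0"
    "\<And>x y. x \<in> P \<Longrightarrow> y \<in> P \<Longrightarrow> y \<noteq> x \<Longrightarrow> d x \<le> dist x y"
    using finite_set_avoid[OF assms] by metis
  show ?thesis
  proof (rule that[of "\<lambda>x. d x / 2"])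
    show "d x / 2 > 0" if "x \<in> P" for x
      using d(1)[OF that] by simp
    fix x y assume xy: "x \<in> P" "y \<in> P" "x \<noteq> y"
    have False if "z \<in> ball x (d x / 2)" "z \<in> ball y (d y / 2)" for z
      using that d(2)[OF xy(1,2)] d(2)[OF xy(2,1)] dist_triangle[of x y z] xy(3)
      by (simp add: dist_commute)
    then show "ball x (d x / 2) \<inter> ball y (d y / 2) = {}"
      by blast
  qed
qed

lemma card_eq_if_singleton_Int:
  assumes "finite P" and disj: "disjoint_family_on V P"
    and "F \<subseteq> (\<Union>x\<in>P. V x)" and one: "\<And>x. x \<in> P \<Longrightarrow> is_singleton (F \<inter> V x)"
  shows "finite F \<and> card F = card P"
proof -
  have F: "F = (\<Union>x\<in>P. F \<inter> V x)"
    using assms(3) by blast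
  have fin: "finite (F \<inter> V x)" if "x \<in> P" for x
    using one[OF that] by (auto simp: is_singleton_def)
  have "finite F"
    using F fin assms(1) by (metis finite_UN_I)
  moreover have "card F = (\<Sum>x\<in>P. card (F \<inter> V x))"
    by (subst F, rule card_UN_disjoint) (use assms(1) fin disj in \<open>auto simp: disjoint_family_on_def\<close>)
  then have "card F = card P"
    using one by (simp add: is_singleton_altdef)
  ultimately show ?thesis ..
qed

lemma homeomorphism_inj_open_image:
  assumes "homeomorphism U V f g" "open V" "open W" "W \<subseteq> U"
  shows "inj_on f W \<and> open (f ` W)"
proof
  show "inj_on f W"
    using assms(1,4) by (metis homeomorphism_apply1 inj_on_inverseI subsetD)
  have "openin (top_of_set U) W"
    using assms(3,4) by (metis inf.absorb_iff2 openin_open_Int)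
  then have "openin (top_of_set V) (f ` W)"
    by (rule homeomorphism_imp_open_map[OF assms(1)])
  then show "open (f ` W)"
    using assms(2) openin_open_trans by blast
qed

lemma disjoint_local_sheets:
  fixes f :: "'a::metric_space \<Rightarrow> 'b::topological_space"
  assumes "finite P"
    and homeo: "\<And>\<zeta>. \<zeta> \<in> P \<Longrightarrow> \<exists>U V g. open U \<and> \<zeta> \<in> U \<and> open V \<and> homeomorphism U V f g"
    and sheet: "\<And>\<zeta>. \<zeta> \<in> P \<Longrightarrow> \<exists>U. open U \<and> \<zeta> \<in> U \<and> f ` (U - R) \<inter> \<Omega> = {}"
  obtains W where "\<And>\<zeta>. \<zeta> \<in> P \<Longrightarrow> open (W \<zeta>) \<and> \<zeta> \<in> W \<zeta> \<and> inj_on f (W \<zeta>)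
      \<and> open (f ` W \<zeta>) \<and> f ` (W \<zeta> - R) \<inter> \<Omega> = {}"
    "disjoint_family_on W P"
proof -
  obtain r where r: "\<And>\<zeta>. \<zeta> \<in> P \<Longrightarrow> r \<zeta> > 0"
    "\<And>\<zeta> \<eta>. \<zeta> \<in> P \<Longrightarrow> \<eta> \<in> P \<Longrightarrow> \<zeta> \<noteq> \<eta> \<Longrightarrow> ball \<zeta> (r \<zeta>) \<inter> ball \<eta> (r \<eta>) = {}"
    using finite_disjoint_balls[OF \<open>finite P\<close>] by metis
  have "\<exists>W. open W \<and> \<zeta> \<in> W \<and> W \<subseteq> ball \<zeta> (r \<zeta>) \<and> inj_on f W \<and> open (f ` W) \<and> f ` (W - R) \<inter> \<Omega> = {}"
    if \<zeta>: "\<zeta> \<in> P" for \<zeta>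
  proof -
    obtain U V g where "open U" "\<zeta> \<in> U" "open V" "homeomorphism U V f g"
      using homeo \<zeta> by blast
    moreover obtain U' where "open U'" "\<zeta> \<in> U'" "f ` (U' - R) \<inter> \<Omega> = {}"
      using sheet \<zeta> by blast
    moreover have "inj_on f (U \<inter> U' \<inter> ball \<zeta> (r \<zeta>)) \<and> open (f ` (U \<inter> U' \<inter> ball \<zeta> (r \<zeta>)))"
      using calculation by (intro homeomorphism_inj_open_image[of U V f g]) auto
    ultimately show ?thesis
      using r(1)[OF \<zeta>] by (intro exI[of _ "U \<inter> U' \<inter> ball \<zeta> (r \<zeta>)"]) auto
  qed
  then obtain W where W: "\<And>\<zeta>. \<zeta> \<in> P \<Longrightarrow> open (W \<zeta>) \<and> \<zeta> \<in> W \<zeta> \<and> W \<zeta> \<subseteq> ball \<zeta> (r \<zeta>)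
      \<and> inj_on f (W \<zeta>) \<and> open (f ` W \<zeta>) \<and> f ` (W \<zeta> - R) \<inter> \<Omega> = {}"
    by metis
  show ?thesis
  proof (rule that)
    show "disjoint_family_on W P"
      unfolding disjoint_family_on_def
    proof (intro ballI impI)
      fix \<zeta> \<eta> assume "\<zeta> \<in> P" "\<eta> \<in> P" "\<zeta> \<noteq> \<eta>"
      then show "W \<zeta> \<inter> W \<eta> = {}"
        using r(2)[of \<zeta> \<eta>] W[of \<zeta>] W[of \<eta>] by blast
    qed
  qed (use W in blast)
qed

lemma closure_component_Int_subset:
  assumes "C \<in> components S"
  shows "closure C \<inter> S \<subseteq> C"
proof -
  obtain T where "closed T" "C = S \<inter> T"
    using closedin_component[OF assms] by (auto simp: closedin_closed)
  then show ?thesis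
    using closure_minimal by blast
qed

lemma connected_eventually_eq_imp_eq:
  assumes "connected S" "a \<in> S" "b \<in> S"
    and loc: "\<And>x. x \<in> S \<Longrightarrow> \<forall>\<^sub>F x' in nhds x. x' \<in> S \<longrightarrow> g x' = g x"
  shows "g a = g b"
proof -
  have "g constant_on S"
  proof (rule locally_constant_imp_constant[OF assms(1)])
    fix x assume x: "x \<in> S"
    then obtain N where N: "open N" "x \<in> N" "\<forall>x'\<in>N. x' \<in> S \<longrightarrow> g x' = g x"
      using loc[OF x] unfolding eventually_nhds by blast
    moreover have "openin (top_of_set S) (S \<inter> N)"
      using N(1) by (rule openin_open_Int)
    ultimately show "\<exists>T. openin (top_of_set S) T \<and> x \<in> T \<and> (\<forall>x'\<in>T. g x' = g x)"
      using x by blast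
  qed
  with assms(2,3) show ?thesis
    unfolding constant_on_def by metis
qed

lemma image_component_subset_component:
  assumes "continuous_on UNIV f" and R: "R \<in> components (UNIV - f -` E)"
    and Omega: "\<Omega> \<in> components (UNIV - E)" and "\<exists>z\<in>R. f z \<in> \<Omega>"
  shows "f ` R \<subseteq> \<Omega>"
  using assms in_components_connected[OF R] in_components_subset[OF R]
  by (intro components_maximal[OF Omega]) (auto intro: connected_continuous_image continuous_on_subset)


lemma closure_eventually_nhds_imp_ex:
  assumes "x \<in> closure S" "\<forall>\<^sub>F y in nhds x. P y"
  shows "\<exists>y\<in>S. P y"
proof -
  obtain N where "open N" "x \<in> N" "\<forall>y\<in>N. P y"
    using assms(2) unfolding eventually_nhds by blast
  with assms(1) show ?thesis
    unfolding closure_iff_nhds_not_empty by blast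
qed


lemma jac_eq_det: "jac f' z = det (matrix (blinfun_apply (f' z)))"
  by (simp add: jac_def det_2 matrix_def Let_def)

lemma closed_critset:
  assumes "continuous_on UNIV f'"
  shows "closed (critset f')"
proof -
  have "continuous_on UNIV (jac f')"
    unfolding jac_def Let_def by (intro continuous_intros assms)
  then show ?thesis
    unfolding critset_def using closed_Collect_eq[of "jac f'" "\<lambda>_. 0"] by auto
qed

lemma jac_nonzero_imp_local_homeomorphism:
  assumes deriv: "\<And>z. (f has_derivative blinfun_apply (f' z)) (at z)"
    and C1: "continuous_on UNIV f'" and J: "jac f' \<zeta> \<noteq> 0"
  shows "\<exists>U V g. open U \<and> \<zeta> \<in> U \<and> open V \<and> homeomorphism U V f g"
proof -
  have lin: "linear (blinfun_apply (f' \<zeta>))"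
    by (rule bounded_linear.linear[OF blinfun.bounded_linear_right])
  with J have "inj (blinfun_apply (f' \<zeta>))"
    by (simp add: jac_eq_det det_nz_iff_inj)
  then obtain g where g: "linear g" "g \<circ> blinfun_apply (f' \<zeta>) = id"
    using linear_injective_left_inverse[OF lin] by blast
  then have "bounded_linear g"
    using linear_conv_bounded_linear by blast
  with g(2) have "Blinfun g o\<^sub>L f' \<zeta> = id_blinfun"
    by (intro blinfun_eqI) (auto simp: bounded_linear_Blinfun_apply fun_eq_iff)
  then show ?thesis
    using inverse_function_theorem[OF open_UNIV deriv C1 UNIV_I] by metis
qed

lemma cluster_inf_mono: "D \<subseteq> E \<Longrightarrow> cluster_inf f D \<subseteq> cluster_inf f E"
  unfolding cluster_inf_def by blast

lemma notin_cluster_inf_bounded: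
  assumes "y \<notin> cluster_inf f D"
  obtains M e where "e > 0" "\<And>z. z \<in> D \<Longrightarrow> dist (f z) y < e \<Longrightarrow> norm z \<le> M"
proof -
  have "\<exists>M e. e > 0 \<and> (\<forall>z\<in>D. dist (f z) y < e \<longrightarrow> norm z \<le> M)"
  proof (rule ccontr)
    assume unbounded: "\<not> ?thesis"
    have "\<exists>z\<in>D. dist (f z) y < inverse (Suc n) \<and> norm z > real n" for n :: nat
    proof -
      have "inverse (real (Suc n)) > 0" by simp
      with unbounded show ?thesis by (auto simp: not_le)
    qed
    then obtain zs where zs: "\<And>n. zs n \<in> D" "\<And>n. dist (f (zs n)) y < inverse (Suc n)"
      "\<And>n. norm (zs n) > real n"
      by metis
    have "filterlim (\<lambda>n. norm (zs n)) at_top sequentially"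
      by (rule filterlim_at_top_mono[OF filterlim_real_sequentially]) (simp add: less_imp_le[OF zs(3)])
    moreover have "((\<lambda>n. dist (f (zs n)) y) \<longlongrightarrow> 0) sequentially"
      by (rule Lim_null_comparison[OF always_eventually LIMSEQ_inverse_real_of_nat])
        (metis less_imp_le zs(2) real_norm_def zero_le_dist abs_of_nonneg)
    then have "((\<lambda>n. f (zs n)) \<longlongrightarrow> y) sequentially"
      using tendsto_dist_iff by blast
    ultimately have "y \<in> cluster_inf f D"
      unfolding cluster_inf_def using zs(1) by blast
    with assms show False ..
  qed
  with that show ?thesis by blast
qed

lemma cluster_inf_Int_ball_empty:
  assumes "\<And>z. z \<in> D \<Longrightarrow> dist (f z) y < e \<Longrightarrow> norm z \<le> M"
  shows "cluster_inf f D \<inter> ball y e = {}"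
proof -
  have False if \<zeta>: "\<zeta> \<in> cluster_inf f D" "\<zeta> \<in> ball y e" for \<zeta>
  proof -
    obtain zs where zs: "\<And>n. zs n \<in> D" "filterlim (\<lambda>n. norm (zs n)) at_top sequentially"
      "((\<lambda>n. f (zs n)) \<longlongrightarrow> \<zeta>) sequentially"
      using \<zeta>(1) unfolding cluster_inf_def by blast
    have "\<forall>\<^sub>F n in sequentially. f (zs n) \<in> ball y e"
      using topological_tendstoD[OF zs(3) open_ball \<zeta>(2)] .
    moreover have "\<forall>\<^sub>F n in sequentially. M < norm (zs n)"
      using zs(2) unfolding filterlim_at_top_dense by blast
    ultimately obtain n where "f (zs n) \<in> ball y e" "M < norm (zs n)"
      using eventually_happens'[OF sequentially_bot eventually_conj] by blast
    with assms[OF zs(1)[of n]] show False by (simp add: dist_commute)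
  qed
  then show ?thesis by blast
qed

lemma closed_cluster_inf: "closed (cluster_inf f D)"
  unfolding closed_def open_contains_ball
proof
  fix y assume "y \<in> - cluster_inf f D"
  then obtain M e where "e > 0" "\<And>z. z \<in> D \<Longrightarrow> dist (f z) y < e \<Longrightarrow> norm z \<le> M"
    using notin_cluster_inf_bounded by blast
  then show "\<exists>e>0. ball y e \<subseteq> - cluster_inf f D"
    using cluster_inf_Int_ball_empty by blast
qed

lemma closure_image_subset_cluster_inf:
  assumes "closed S" "continuous_on S f"
  shows "closure (f ` S) \<subseteq> f ` S \<union> cluster_inf f S"
proof
  fix y assume y: "y \<in> closure (f ` S)"
  show "y \<in> f ` S \<union> cluster_inf f S"
  proof (cases "y \<in> cluster_inf f S")
    case False
    then obtain M e where e: "e > 0" "\<And>z. z \<in> S \<Longrightarrow> dist (f z) y < e \<Longrightarrow> norm z \<le> M"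
      using notin_cluster_inf_bounded by blast
    have "compact (f ` (S \<inter> cball 0 M))"
      using assms by (intro compact_continuous_image closed_Int_compact) (auto intro: continuous_on_subset)
    moreover have "y \<in> closure (f ` (S \<inter> cball 0 M))"
      unfolding closure_approachable
    proof (intro allI impI)
      fix r :: real assume "r > 0"
      with e(1) have "min r e > 0" by simp
      with y obtain z where "z \<in> S" "dist (f z) y < min r e"
        unfolding closure_approachable by blast
      with e(2)[of z] show "\<exists>x\<in>f ` (S \<inter> cball 0 M). dist x y < r" by auto
    qed
    ultimately have "y \<in> f ` (S \<inter> cball 0 M)"
      by (simp add: closure_closed compact_imp_closed)
    then show ?thesis by blast
  qed simp
qed

lemma closed_image_Un_cluster_inf:
  assumes "closed S" "continuous_on S f"
  shows "closed (f ` S \<union> cluster_inf f UNIV)"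
proof -
  have "closure (f ` S \<union> cluster_inf f UNIV) \<subseteq> f ` S \<union> cluster_inf f S \<union> cluster_inf f UNIV"
    using closure_image_subset_cluster_inf[OF assms] closed_cluster_inf by (auto simp: closure_Un)
  also have "\<dots> = f ` S \<union> cluster_inf f UNIV"
    using cluster_inf_mono[of S UNIV f] by blast
  finally show ?thesis using closure_subset_eq by blast
qed

lemma compact_fibre_closure:
  assumes "continuous_on UNIV f" "y \<notin> cluster_inf f R"
  shows "compact (f -` {y} \<inter> closure R)"
proof -
  obtain M e where e: "e > 0" "\<And>z. z \<in> R \<Longrightarrow> dist (f z) y < e \<Longrightarrow> norm z \<le> M"
    using notin_cluster_inf_bounded[OF assms(2)] by blast
  have "open (f -` ball y e)"
    using assms(1) by (simp add: open_vimage)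
  then have "f -` {y} \<inter> closure R \<subseteq> closure (f -` ball y e \<inter> R)"
    using open_Int_closure_subset e(1) by fastforce
  also have "\<dots> \<subseteq> cball 0 M"
    using e(2) by (intro closure_minimal) (auto simp: dist_commute)
  finally have "bounded (f -` {y} \<inter> closure R)"
    using bounded_cball bounded_subset by blast
  moreover have "closed (f -` {y} \<inter> closure R)"
    using assms(1) by (intro closed_Int closed_vimage) auto
  ultimately show ?thesis
    using compact_eq_bounded_closed by blast
qed

lemma finite_fibre_closure:
  fixes f :: "real^2 \<Rightarrow> real^2"
  assumes contf: "continuous_on UNIV f" and y: "y \<notin> cluster_inf f R"
    and homeo: "\<And>\<zeta>. \<zeta> \<in> f -` {y} \<inter> closure R \<Longrightarrow>
      \<exists>U V g. open U \<and> \<zeta> \<in> U \<and> open V \<and> homeomorphism U V f g"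
  shows "finite (f -` {y} \<inter> closure R)"
proof (rule finite_if_compact_locally_injective[where c = y])
  show "compact (f -` {y} \<inter> closure R)"
    by (rule compact_fibre_closure[OF contf y])
  show "\<exists>U. open U \<and> \<zeta> \<in> U \<and> inj_on f U" if \<zeta>: "\<zeta> \<in> f -` {y} \<inter> closure R" for \<zeta>
  proof -
    obtain U V g where "open U" "\<zeta> \<in> U" "open V" "homeomorphism U V f g"
      using homeo \<zeta> by blast
    then show ?thesis
      using homeomorphism_inj_open_image[of U V f g U] by blast
  qed
qed auto

lemma eventually_fibre_subset:
  fixes f :: "real^2 \<Rightarrow> real^2"
  assumes contf: "continuous_on UNIV f" and y: "y \<notin> cluster_inf f R"
    and "open V" and fibre: "f -` {y} \<inter> closure R \<subseteq> V"
  shows "\<forall>\<^sub>F y' in nhds y. {z\<in>R. f z = y'} \<subseteq> V"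
proof -
  obtain M e where e: "e > 0" "\<And>z. z \<in> R \<Longrightarrow> dist (f z) y < e \<Longrightarrow> norm z \<le> M"
    using notin_cluster_inf_bounded[OF y] by blast
  define K where "K = cball 0 M \<inter> (closure R - V)"
  have "compact (f ` K)"
    unfolding K_def using contf \<open>open V\<close>
    by (intro compact_continuous_image compact_Int_closed) (auto intro: continuous_on_subset)
  moreover have "y \<notin> f ` K"
    using fibre unfolding K_def by auto
  ultimately have "\<forall>\<^sub>F y' in nhds y. y' \<in> - f ` K"
    by (intro eventually_nhds_in_open) (auto simp: compact_imp_closed)
  moreover have "\<forall>\<^sub>F y' in nhds y. y' \<in> ball y e"
    using e(1) by (intro eventually_nhds_in_open) auto
  ultimately show ?thesis
  proof eventually_elim
    case (elim y')
    show ?case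
    proof
      fix z assume z: "z \<in> {z\<in>R. f z = y'}"
      with e(2) elim(2) have "norm z \<le> M"
        by (auto simp: dist_commute)
      with z elim(1) closure_subset show "z \<in> V"
        unfolding K_def by fastforce
    qed
  qed
qed

lemma ecount_fibre_eventually_eq:
  fixes f :: "real^2 \<Rightarrow> real^2"
  assumes contf: "continuous_on UNIV f" and y: "y \<notin> cluster_inf f R"
    and homeo: "\<And>\<zeta>. \<zeta> \<in> f -` {y} \<inter> closure R \<Longrightarrow>
      \<exists>U V g. open U \<and> \<zeta> \<in> U \<and> open V \<and> homeomorphism U V f g"
    and sheet: "\<And>\<zeta>. \<zeta> \<in> f -` {y} \<inter> closure R \<Longrightarrow> \<exists>U. open U \<and> \<zeta> \<in> U \<and> f ` (U - R) \<inter> \<Omega> = {}"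
  shows "\<forall>\<^sub>F y' in nhds y. y' \<in> \<Omega> \<longrightarrow> ecount {z\<in>R. f z = y'} = ecount (f -` {y} \<inter> closure R)"
proof -
  define P where "P = f -` {y} \<inter> closure R"
  have "finite P"
    unfolding P_def using finite_fibre_closure[OF contf y homeo] .
  obtain W where W: "\<And>\<zeta>. \<zeta> \<in> P \<Longrightarrow> open (W \<zeta>) \<and> \<zeta> \<in> W \<zeta> \<and> inj_on f (W \<zeta>)
      \<and> open (f ` W \<zeta>) \<and> f ` (W \<zeta> - R) \<inter> \<Omega> = {}"
    and disj: "disjoint_family_on W P"
    using disjoint_local_sheets[OF \<open>finite P\<close> homeo[folded P_def] sheet[folded P_def]] by blast
  have "\<forall>\<^sub>F y' in nhds y. {z\<in>R. f z = y'} \<subseteq> (\<Union>\<zeta>\<in>P. W \<zeta>)"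
    using W by (intro eventually_fibre_subset[OF contf y]) (auto simp: P_def)
  moreover have "\<forall>\<^sub>F y' in nhds y. \<forall>\<zeta>\<in>P. y' \<in> f ` W \<zeta>"
    using W \<open>finite P\<close> by (intro eventually_ball_finite ballI eventually_nhds_in_open) (auto simp: P_def)
  ultimately show ?thesis
  proof eventually_elim
    case (elim y')
    show ?case
    proof
      assume "y' \<in> \<Omega>"
      have "is_singleton ({z\<in>R. f z = y'} \<inter> W \<zeta>)" if \<zeta>: "\<zeta> \<in> P" for \<zeta>
      proof -
        obtain x where x: "x \<in> W \<zeta>" "f x = y'"
          using elim(2) \<zeta> by blast
        with W[OF \<zeta>] \<open>y' \<in> \<Omega>\<close> have "x \<in> R"
          by blast
        with x W[OF \<zeta>] show ?thesis
          unfolding is_singleton_def by (auto dest: inj_onD)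
      qed
      then have "finite {z\<in>R. f z = y'} \<and> card {z\<in>R. f z = y'} = card P"
        by (rule card_eq_if_singleton_Int[OF \<open>finite P\<close> disj elim(1)])
      then show "ecount {z\<in>R. f z = y'} = ecount (f -` {y} \<inter> closure R)"
        using \<open>finite P\<close> by (simp add: ecount_def P_def)
    qed
  qed
qed

definition exceptional_values ::
    "(real^2 \<Rightarrow> real^2) \<Rightarrow> (real^2 \<Rightarrow> ((real^2) \<Rightarrow>\<^sub>L (real^2))) \<Rightarrow> (real^2) set" where
  "exceptional_values f f' = f ` critset f' \<union> cluster_inf f UNIV"

lemma open_components_Diff_exceptional_values:
  assumes contf: "continuous_on UNIV f" and C1: "continuous_on UNIV f'"
  shows "\<Omega> \<in> components (UNIV - exceptional_values f f') \<Longrightarrow> open \<Omega>"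
    and "R \<in> components (UNIV - f -` exceptional_values f f') \<Longrightarrow> open R"
proof -
  have closed: "closed (exceptional_values f f')"
    unfolding exceptional_values_def
    using closed_image_Un_cluster_inf[OF closed_critset[OF C1]] contf continuous_on_subset by blast
  then show "\<Omega> \<in> components (UNIV - exceptional_values f f') \<Longrightarrow> open \<Omega>"
    by (metis Compl_eq_Diff_UNIV open_Compl open_components)
  from closed contf have "closed (f -` exceptional_values f f')"
    by (rule closed_vimage)
  then show "R \<in> components (UNIV - f -` exceptional_values f f') \<Longrightarrow> open R"
    by (metis Compl_eq_Diff_UNIV open_Compl open_components)
qed

lemma ecount_fibre_locally_constant:
  fixes f :: "real^2 \<Rightarrow> real^2"
  assumes deriv: "\<And>z. (f has_derivative blinfun_apply (f' z)) (at z)"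
    and C1: "continuous_on UNIV f'"
    and R: "R \<in> components (UNIV - f -` exceptional_values f f')"
    and Omega: "\<Omega> \<in> components (UNIV - exceptional_values f f')" and "y \<in> \<Omega>"
  shows "\<forall>\<^sub>F y' in nhds y. y' \<in> \<Omega> \<longrightarrow> ecount {z\<in>R. f z = y'} = ecount {z\<in>R. f z = y}"
proof -
  have contf: "continuous_on UNIV f"
    using deriv has_derivative_continuous continuous_at_imp_continuous_on by blast
  have yE: "y \<notin> exceptional_values f f'"
    using in_components_subset[OF Omega] \<open>y \<in> \<Omega>\<close> by blast
  have fibre: "f -` {y} \<inter> closure R = {z\<in>R. f z = y}"
    using closure_component_Int_subset[OF R] yE closure_subset by auto
  have "\<forall>\<^sub>F y' in nhds y. y' \<in> \<Omega> \<longrightarrow> ecount {z\<in>R. f z = y'} = ecount (f -` {y} \<inter> closure R)"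
  proof (rule ecount_fibre_eventually_eq[OF contf])
    show "y \<notin> cluster_inf f R"
      using yE cluster_inf_mono[of R UNIV f] unfolding exceptional_values_def by blast
    fix \<zeta> assume \<zeta>: "\<zeta> \<in> f -` {y} \<inter> closure R"
    then have "jac f' \<zeta> \<noteq> 0"
      using yE unfolding exceptional_values_def critset_def by auto
    then show "\<exists>U V g. open U \<and> \<zeta> \<in> U \<and> open V \<and> homeomorphism U V f g"
      by (rule jac_nonzero_imp_local_homeomorphism[OF deriv C1])
    show "\<exists>U. open U \<and> \<zeta> \<in> U \<and> f ` (U - R) \<inter> \<Omega> = {}"
      using open_components_Diff_exceptional_values(2)[OF contf C1 R] \<zeta> fibre by blast
  qed
  then show ?thesis
    by (simp only: fibre)
qed

lemma ecount_fibre_constant: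
  fixes f :: "real^2 \<Rightarrow> real^2"
  assumes deriv: "\<And>z. (f has_derivative blinfun_apply (f' z)) (at z)"
    and C1: "continuous_on UNIV f'"
    and R: "R \<in> components (UNIV - f -` exceptional_values f f')"
    and Omega: "\<Omega> \<in> components (UNIV - exceptional_values f f')" and "y \<in> \<Omega>" "y' \<in> \<Omega>"
  shows "ecount {z\<in>R. f z = y} = ecount {z\<in>R. f z = y'}"
  using connected_eventually_eq_imp_eq[OF in_components_connected[OF Omega] \<open>y \<in> \<Omega>\<close> \<open>y' \<in> \<Omega>\<close>,
      where g = "\<lambda>y. ecount {z\<in>R. f z = y}"]
    ecount_fibre_locally_constant[OF deriv C1 R Omega] by blast

lemma ecount_fibre_eventually_eq_frontier:
  fixes f :: "real^2 \<Rightarrow> real^2"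
  assumes deriv: "\<And>z. (f has_derivative blinfun_apply (f' z)) (at z)"
    and C1: "continuous_on UNIV f'"
    and "f ` R \<subseteq> \<Omega>" "open \<Omega>" "w \<in> frontier \<Omega>"
    and i: "w \<notin> cluster_inf f R"
    and ii: "f -` {w} \<inter> frontier R \<inter> critset f' = {}"
    and iv: "\<forall>\<zeta>\<in>f -` {w} \<inter> frontier R. \<exists>U. open U \<and> \<zeta> \<in> U \<and> f ` (U - R) \<inter> \<Omega> = {}"
  shows "\<forall>\<^sub>F y in nhds w. y \<in> \<Omega> \<longrightarrow> ecount {z\<in>R. f z = y} = ecount (f -` {w} \<inter> frontier R)"
proof -
  have contf: "continuous_on UNIV f"
    using deriv has_derivative_continuous continuous_at_imp_continuous_on by blast
  have "w \<notin> \<Omega>"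
    using \<open>w \<in> frontier \<Omega>\<close> \<open>open \<Omega>\<close> by (simp add: frontier_def interior_open)
  with \<open>f ` R \<subseteq> \<Omega>\<close> have fibre: "f -` {w} \<inter> closure R = f -` {w} \<inter> frontier R"
    using interior_subset by (fastforce simp: frontier_def)
  show ?thesis
    unfolding fibre[symmetric]
  proof (rule ecount_fibre_eventually_eq[OF contf i])
    fix \<zeta> assume "\<zeta> \<in> f -` {w} \<inter> closure R"
    then have \<zeta>: "\<zeta> \<in> f -` {w} \<inter> frontier R"
      using fibre by blast
    with ii have "jac f' \<zeta> \<noteq> 0"
      unfolding critset_def by blast
    then show "\<exists>U V g. open U \<and> \<zeta> \<in> U \<and> open V \<and> homeomorphism U V f g"
      by (rule jac_nonzero_imp_local_homeomorphism[OF deriv C1])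
    show "\<exists>U. open U \<and> \<zeta> \<in> U \<and> f ` (U - R) \<inter> \<Omega> = {}"
      using iv \<zeta> by blast
  qed
qed

theorem theorem3p21:
  fixes f :: "real^2 \<Rightarrow> real^2" and f' :: "real^2 \<Rightarrow> ((real^2) \<Rightarrow>\<^sub>L (real^2))"
    and R \<Omega> :: "(real^2) set" and w :: "real^2"
  assumes deriv: "\<And>z. (f has_derivative blinfun_apply (f' z)) (at z)"
    and C1: "continuous_on UNIV f'"
    and R: "R \<in> components (UNIV - f -` (f ` critset f' \<union> cluster_inf f UNIV))"
    and Omega: "\<Omega> \<in> components (UNIV - (f ` critset f' \<union> cluster_inf f UNIV))"
    and meet: "\<exists>z\<in>R. f z \<in> \<Omega>"
    and w: "w \<in> frontier \<Omega>"
    and i: "w \<notin> cluster_inf f R"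
    and ii: "f -` {w} \<inter> frontier R \<inter> critset f' = {}"
    and iii: "f -` {w} \<inter> frontier R \<noteq> {}"
    and iv: "\<forall>\<zeta>\<in>f -` {w} \<inter> frontier R. \<exists>U. open U \<and> \<zeta> \<in> U \<and> f ` (U - R) \<inter> \<Omega> = {}"
  shows "ecount (f -` {w} \<inter> frontier R) = Val f R \<Omega>"
proof -
  note R = R[folded exceptional_values_def] and Omega = Omega[folded exceptional_values_def]
  have contf: "continuous_on UNIV f"
    using deriv has_derivative_continuous continuous_at_imp_continuous_on by blast
  have "f ` R \<subseteq> \<Omega>"
    using image_component_subset_component[OF contf R Omega meet] .
  moreover have "open \<Omega>"
    using open_components_Diff_exceptional_values(1)[OF contf C1 Omega] .
  ultimately have "\<forall>\<^sub>F y in nhds w. y \<in> \<Omega> \<longrightarrow> ecount {z\<in>R. f z = y} = ecount (f -` {w} \<inter> frontier R)"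
    using ecount_fibre_eventually_eq_frontier[OF deriv C1 _ _ w i ii iv] by blast
  moreover have "w \<in> closure \<Omega>"
    using w by (simp add: frontier_def)
  ultimately obtain y0 where y0: "y0 \<in> \<Omega>" "ecount {z\<in>R. f z = y0} = ecount (f -` {w} \<inter> frontier R)"
    using closure_eventually_nhds_imp_ex by blast
  have "Val f R \<Omega> = (SUP y\<in>\<Omega>. ecount {z\<in>R. f z = y0})"
    unfolding Val_def using ecount_fibre_constant[OF deriv C1 R Omega _ y0(1)] by (rule SUP_cong[OF refl])
  also have "\<dots> = ecount (f -` {w} \<inter> frontier R)"
    using y0 by (subst SUP_const) auto
  finally show ?thesis ..
qed

end
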